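(* Let $\mathcal{C}$ be an $(n,k)$ binary linear code with $n\ge2$, $k\ge1$, generator matrix $\mathbf{G}$ (any representation), information functions $\tilde e_g$, coefficients $a_t$, check-node EXIT function $I_E(p)$ and quantity $\Delta_{n-2}$ as defined in the context. Then: (i) $\frac{\mathrm{d}I_E}{\mathrm{d}p}\big|_{p=0}=\frac{(n-1)a_0-a_1}{n}$; (ii) $a_0=0$ if and only if $d_{\min}(\mathcal{C})\ge2$; (iii) if $d_{\min}(\mathcal{C})\ge 2$, then $a_1=2\Delta_{n-2}$ and hence $\frac{\mathrm{d}I_E}{\mathrm{d}p}\big|_{p=0}=-\frac{2}{n}\Delta_{n-2}$; moreover $a_1=\Delta_{n-2}=0$ if $d_{\min}(\mathcal{C})\ge3$, while $\Delta_{n-2}>0$ (so $a_1\neq0$) if $d_{\min}(\mathcal{C})=2$.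
   Context: For a $k\times n$ generator matrix $\mathbf{G}$ (rank $k$) of a binary $(n,k)$ code and $g\in\{0,\dots,n\}$, the un-normalized information function is $\tilde e_g=\sum_{S}\operatorname{rank}(\mathbf{G}_S)$, the sum over all $g$-element sets $S$ of column indices, $\mathbf{G}_S$ the $k\times g$ submatrix of those columns (rank of empty matrix is $0$). Set $a_t=(n-t)\tilde e_{n-t}-(t+1)\tilde e_{n-t-1}$ for $t=0,\dots,n-1$, and define the check-node EXIT function on the binary erasure channel $I_E(p)=1-\frac1n\sum_{t=0}^{n-1}a_t\,p^t(1-p)^{n-t-1}$, $p\in[0,1]$. Define $\Delta_{n-2}=\sum_{S}\big(k-\operatorname{rank}(\mathbf{G}_S)\big)$, the sum over all $(n-2)$-element sets $S$ of column indices. $d_{\min}$ denotes minimum Hamming distance. *)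

theory Defs
  imports "HOL-Library.Z2" "Jordan_Normal_Form.DL_Rank_Submatrix"
begin

text \<open>Binary matrices are Jordan_Normal_Form matrices over the field bit = GF(2).
  A generator matrix G of an (n,k) code is a k x n matrix (G in carrier_mat k n).\<close>

definition mrank :: "bit mat \<Rightarrow> nat" where
  "mrank A = vec_space.rank (dim_row A) A"

definition colsub :: "bit mat \<Rightarrow> nat set \<Rightarrow> bit mat" where
  "colsub G S = submatrix G UNIV S"

definition info_fun :: "bit mat \<Rightarrow> nat \<Rightarrow> nat" where
  "info_fun G g = (\<Sum>S \<in> {S. S \<subseteq> {0..<dim_col G} \<and> card S = g}. mrank (colsub G S))"

definition coef_a :: "bit mat \<Rightarrow> nat \<Rightarrow> int" where
  "coef_a G t = int (dim_col G - t) * int (info_fun G (dim_col G - t))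
              - int (t + 1) * int (info_fun G (dim_col G - t - 1))"

definition exit_IE :: "bit mat \<Rightarrow> real \<Rightarrow> real" where
  "exit_IE G p = 1 - (1 / real (dim_col G)) *
     (\<Sum>t<dim_col G. real_of_int (coef_a G t) * p ^ t * (1 - p) ^ (dim_col G - t - 1))"

definition Delta :: "bit mat \<Rightarrow> nat" where
  "Delta G = (\<Sum>S \<in> {S. S \<subseteq> {0..<dim_col G} \<and> card S = dim_col G - 2}.
                 dim_row G - mrank (colsub G S))"

definition code :: "bit mat \<Rightarrow> bit vec set" where
  "code G = {transpose_mat G *\<^sub>v x | x. x \<in> carrier_vec (dim_row G)}"

definition hweight :: "bit vec \<Rightarrow> nat" where
  "hweight c = card {j. j < dim_vec c \<and> c $ j \<noteq> 0}"

definition dmin :: "bit mat \<Rightarrow> nat" where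
  "dmin G = Min {hweight c | c. c \<in> code G \<and> c \<noteq> 0\<^sub>v (dim_col G)}"

end

theory Submission imports Defs "Jordan_Normal_Form.Matrix_Kernel" begin

text \<open>
  Writing D_g for the total rank deficiency sum of (k - rank G_S) over the g-subsets S of
  columns, every information function is e_g = k (n choose g) - D_g.  Substituting this into
  a_0 and a_1 gives a_0 = D_(n-1) and a_1 = 2 D_(n-2) - (n - 1) D_(n-1), using D_n = 0.
  The link with the minimum distance is the duality between column subsets and codewords:
  a set S of columns is rank deficient iff some nonzero codeword x^T G vanishes on S, so
  D_(n-m) = 0 iff every nonzero codeword has weight > m, i.e. iff m < d_min.
  Finally, the derivative at 0 of the Bernstein-type sum defining I_E only sees the
  coefficients a_0 and a_1.
\<close>

section \<open>Rank and orthogonal vectors\<close>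

lemma (in vec_space) mat_kernel_submodule:
  assumes M: "M \<in> carrier_mat nr n"
  shows "submodule class_ring (mat_kernel M) V"
  by unfold_locales
    (insert M mult_add_distrib_mat_vec[OF M] mult_mat_vec[OF M] mat_kernel[OF M],
     auto simp: class_ring_simps)

lemma (in vec_space) orth_span:
  assumes T: "T \<subseteq> carrier_vec n" and x: "x \<in> carrier_vec n"
    and orth: "\<forall>t\<in>T. t \<bullet> x = 0"
  shows "\<forall>y\<in>span T. y \<bullet> x = 0"
proof -
  define M where "M = mat_of_rows n [x]"
  have M: "M \<in> carrier_mat 1 n" unfolding M_def by auto
  have x_vec: "vec n (($) x) = x" by (rule eq_vecI) (use x in auto)
  have orth_iff_kernel: "y \<bullet> x = 0 \<longleftrightarrow> y \<in> mat_kernel M" if y: "y \<in> carrier_vec n" for y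
  proof -
    have entry: "(M *\<^sub>v y) $ 0 = x \<bullet> y" unfolding M_def by (simp add: mat_of_rows_def x_vec)
    have "M *\<^sub>v y = 0\<^sub>v 1 \<longleftrightarrow> x \<bullet> y = 0"
    proof
      assume "M *\<^sub>v y = 0\<^sub>v 1"
      then show "x \<bullet> y = 0" using entry by simp
    next
      assume "x \<bullet> y = 0"
      then show "M *\<^sub>v y = 0\<^sub>v 1" using M entry by (intro eq_vecI) auto
    qed
    then show ?thesis
      using comm_scalar_prod[OF y x] mat_kernelI[OF M y] mat_kernelD[OF M] by auto
  qed
  have "T \<subseteq> mat_kernel M" using orth_iff_kernel T orth by blast
  then have "span T \<subseteq> mat_kernel M" using span_is_subset[OF _ mat_kernel_submodule[OF M]] by blast
  then show ?thesis using orth_iff_kernel mat_kernelD(1)[OF M] by blast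
qed

lemma (in vec_space) rank_spanning_indpt:
  assumes A: "A \<in> carrier_mat n m"
  obtains S where "S \<subseteq> set (cols A)" "S \<subseteq> carrier_vec n" "lin_indpt S" "finite S"
    "card S = rank A" "set (cols A) \<subseteq> span S"
proof -
  have "lin_indpt {}" unfolding lin_dep_def by auto
  then obtain S where max: "maximal S (\<lambda>T. T \<subseteq> set (cols A) \<and> lin_indpt T)" and fin: "finite S"
    using maximal_exists_superset[of "set (cols A)" "\<lambda>T. T \<subseteq> set (cols A) \<and> lin_indpt T" "{}"]
    by auto
  have S: "S \<subseteq> set (cols A)" "lin_indpt S" using max unfolding maximal_def by blast+
  have cols: "set (cols A) \<subseteq> carrier_vec n" using cols_dim A by blast
  have "w \<in> span S" if w: "w \<in> set (cols A)" for w
  proof (cases "w \<in> S")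
    case True
    then show ?thesis using in_own_span S(1) cols by blast
  next
    case False
    have "insert w S \<subseteq> set (cols A)" using w S(1) by blast
    moreover have "insert w S \<noteq> S" using False by blast
    ultimately have "\<not> lin_indpt (insert w S)" using max unfolding maximal_def by blast
    then have "lin_dep (S \<union> {w})" by simp
    then show ?thesis using lin_dep_iff_in_span[OF _ S(2) _ False] S(1) w cols by blast
  qed
  then have "set (cols A) \<subseteq> span S" by blast
  moreover have "S \<subseteq> carrier_vec n" using S(1) cols by (rule subset_trans)
  ultimately show ?thesis using that S fin rank_card_indpt[OF A max] by simp
qed

lemma (in vec_space) rank_le_dim:
  assumes A: "A \<in> carrier_mat n m"
  shows "rank A \<le> n"
proof -
  obtain S where S: "S \<subseteq> carrier_vec n" "lin_indpt S" "card S = rank A"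
    using rank_spanning_indpt[OF A] by metis
  have "card S \<le> dim" using li_le_dim(2)[OF fin_dim S(1) S(2)] .
  then show ?thesis using S(3) dim_is_n by simp
qed

lemma (in vec_space) full_rank_orth:
  assumes A: "A \<in> carrier_mat n m" and r: "rank A = n" and x: "x \<in> carrier_vec n"
    and orth: "\<forall>j<m. col A j \<bullet> x = 0"
  shows "x = 0\<^sub>v n"
proof -
  obtain S where S: "S \<subseteq> set (cols A)" "lin_indpt S" "finite S" "card S = rank A"
    and sub: "S \<subseteq> carrier_vec n"
    using rank_spanning_indpt[OF A] by metis
  have "dim \<le> card S" using S(4) r dim_is_n by simp
  then have "basis S" by (intro dim_li_is_basis[OF fin_dim S(3) _ S(2)]) (simp add: sub)
  then have span_S: "span S = carrier_vec n" unfolding basis_def by simp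
  have "\<forall>t\<in>S. t \<bullet> x = 0"
  proof
    fix t assume "t \<in> S"
    then obtain j where "j < m" "t = col A j" using S(1) A unfolding cols_def by auto
    then show "t \<bullet> x = 0" using orth by blast
  qed
  then have orth_all: "\<forall>y\<in>carrier_vec n. y \<bullet> x = 0" using orth_span[OF sub x] span_S by blast
  show ?thesis
  proof (rule eq_vecI)
    fix i assume "i < dim_vec (0\<^sub>v n)"
    then have i: "i < n" by simp
    have "unit_vec n i \<bullet> x = 0" using orth_all unit_vec_carrier by blast
    then show "x $ i = 0\<^sub>v n $ i" using i x by (simp add: scalar_prod_left_unit)
  qed (use x in simp)
qed

text \<open>Conversely, if the columns have deficient rank, some nonzero vector is
  orthogonal to all of them: the (at most n - 1) vectors of a spanning independent set
  together with a zero row form a singular square matrix, whose kernel provides it.\<close>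
lemma (in vec_space) low_rank_orth:
  assumes A: "A \<in> carrier_mat n m" and r: "rank A < n"
  shows "\<exists>x\<in>carrier_vec n. x \<noteq> 0\<^sub>v n \<and> (\<forall>j<m. col A j \<bullet> x = 0)"
proof -
  obtain S where S: "S \<subseteq> carrier_vec n" "finite S" "card S = rank A" "set (cols A) \<subseteq> span S"
    using rank_spanning_indpt[OF A] by metis
  note sub = S(1)
  obtain ss where ss: "set ss = S" "distinct ss" using finite_distinct_list[OF S(2)] by blast
  have len: "length ss < n" using ss S(3) r distinct_card by fastforce
  define c where "c i = (if i < length ss then ss ! i else 0\<^sub>v n)" for i
  have c: "c \<in> {0..<n} \<rightarrow> carrier_vec n" using sub ss nth_mem unfolding c_def by fastforce
  define P where "P = mat\<^sub>r n n (\<lambda>i. if i = n - 1 then 0\<^sub>v n else c i)"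
  have P: "P \<in> carrier_mat n n" unfolding P_def by simp
  have "det P = 0" unfolding P_def by (rule det_row_0[OF _ c]) (use len in simp)
  then obtain v where v: "v \<in> carrier_vec n" "v \<noteq> 0\<^sub>v n" "P *\<^sub>v v = 0\<^sub>v n"
    using det_0_iff_vec_prod_zero[OF P] by blast
  have "t \<bullet> v = 0" if t: "t \<in> S" for t
  proof -
    obtain i where i: "i < length ss" "t = ss ! i" using t ss by (metis in_set_conv_nth)
    have i_row: "i < n" "i \<noteq> n - 1" using i len by auto
    have "row P i = t" unfolding P_def using i_row i sub t c_def by (intro eq_vecI) (auto simp: row_def)
    moreover have "(P *\<^sub>v v) $ i = row P i \<bullet> v" using P i_row by simp
    ultimately show ?thesis using v(3) i_row by simp
  qed
  then have "\<forall>y\<in>span S. y \<bullet> v = 0" using orth_span[OF sub v(1)] by blast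
  then have "\<forall>j<m. col A j \<bullet> v = 0" using S(4) A unfolding cols_def by fastforce
  then show ?thesis using v by blast
qed

lemma (in vec_space) rank_lt_iff_orth:
  assumes A: "A \<in> carrier_mat n m"
  shows "rank A < n \<longleftrightarrow> (\<exists>x\<in>carrier_vec n. x \<noteq> 0\<^sub>v n \<and> (\<forall>j<m. col A j \<bullet> x = 0))"
  using low_rank_orth[OF A] full_rank_orth[OF A] rank_le_dim[OF A] by (meson le_neq_implies_less)

section \<open>Column submatrices and codewords\<close>

lemma colsub_carrier:
  assumes G: "G \<in> carrier_mat k n" and S: "S \<subseteq> {0..<n}"
  shows "colsub G S \<in> carrier_mat k (card S)"
proof -
  have "{j. j < n \<and> j \<in> S} = S" using S by auto
  then show ?thesis using G unfolding colsub_def by (intro carrier_matI) (auto simp: dim_submatrix)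
qed

lemma col_colsub:
  assumes G: "G \<in> carrier_mat k n" and S: "S \<subseteq> {0..<n}" and l: "l < card S"
  shows "col (colsub G S) l = col G (pick S l)"
proof (rule eq_vecI)
  have CS: "colsub G S \<in> carrier_mat k (card S)" using colsub_carrier[OF G S] .
  have cols_S: "{j. j < n \<and> j \<in> S} = S" using S by auto
  have "pick S l \<in> S" using pick_in_set l by blast
  then have pick_lt: "pick S l < n" using S by auto
  fix i assume "i < dim_vec (col G (pick S l))"
  then have i: "i < k" using G by simp
  have "colsub G S $$ (i, l) = G $$ (pick UNIV i, pick S l)" unfolding colsub_def
    using G cols_S i l by (intro submatrix_index) auto
  then show "col (colsub G S) l $ i = col G (pick S l) $ i"
    using CS G i l pick_lt by (simp add: pick_UNIV)
qed (use colsub_carrier[OF G S] G in simp)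

lemma orth_colsub_iff:
  assumes G: "G \<in> carrier_mat k n" and S: "S \<subseteq> {0..<n}"
  shows "(\<forall>l<card S. col (colsub G S) l \<bullet> x = 0) \<longleftrightarrow> (\<forall>j\<in>S. col G j \<bullet> x = 0)"
proof
  assume h: "\<forall>l<card S. col (colsub G S) l \<bullet> x = 0"
  show "\<forall>j\<in>S. col G j \<bullet> x = 0"
  proof
    fix j assume j: "j \<in> S"
    have "finite S" using S finite_subset by blast
    then have l: "card {a \<in> S. a < j} < card S" using j by (intro psubset_card_mono) auto
    then show "col G j \<bullet> x = 0" using h col_colsub[OF G S l] pick_card_in_set[OF j] by metis
  qed
next
  assume "\<forall>j\<in>S. col G j \<bullet> x = 0"
  then show "\<forall>l<card S. col (colsub G S) l \<bullet> x = 0"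
    using col_colsub[OF G S] pick_in_set by simp
qed

lemma mrank_colsub_le:
  assumes G: "G \<in> carrier_mat k n" and S: "S \<subseteq> {0..<n}"
  shows "mrank (colsub G S) \<le> k"
  using vec_space.rank_le_dim[OF colsub_carrier[OF G S]] colsub_carrier[OF G S]
  unfolding mrank_def by simp

lemma mrank_colsub_lt_iff:
  assumes G: "G \<in> carrier_mat k n" and S: "S \<subseteq> {0..<n}"
  shows "mrank (colsub G S) < k \<longleftrightarrow> (\<exists>x\<in>carrier_vec k. x \<noteq> 0\<^sub>v k \<and> (\<forall>j\<in>S. col G j \<bullet> x = 0))"
  using vec_space.rank_lt_iff_orth[OF colsub_carrier[OF G S]] colsub_carrier[OF G S]
    orth_colsub_iff[OF G S] unfolding mrank_def by simp

lemma full_rank_encode_eq_0_iff: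
  assumes G: "G \<in> carrier_mat k n" and r: "mrank G = k" and x: "x \<in> carrier_vec k"
  shows "transpose_mat G *\<^sub>v x = 0\<^sub>v n \<longleftrightarrow> x = 0\<^sub>v k"
proof
  assume "transpose_mat G *\<^sub>v x = 0\<^sub>v n"
  then have "\<forall>j<n. col G j \<bullet> x = 0" using G x by (metis index_mult_mat_vec index_zero_vec(1)
        index_transpose_mat(2,3) row_transpose carrier_matD(2))
  moreover have "vec_space.rank k G = k" using r G unfolding mrank_def by simp
  ultimately show "x = 0\<^sub>v k" using vec_space.full_rank_orth[OF G _ x] by blast
qed (use G in \<open>auto intro!: eq_vecI\<close>)

lemma deficient_iff_vanishing_codeword:
  assumes G: "G \<in> carrier_mat k n" and r: "mrank G = k" and S: "S \<subseteq> {0..<n}"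
  shows "mrank (colsub G S) < k \<longleftrightarrow> (\<exists>c\<in>code G. c \<noteq> 0\<^sub>v n \<and> (\<forall>j\<in>S. c $ j = 0))"
proof -
  have entry: "(transpose_mat G *\<^sub>v x) $ j = col G j \<bullet> x" if "j \<in> S" for x j
    using G S that by auto
  have "(\<exists>c\<in>code G. c \<noteq> 0\<^sub>v n \<and> (\<forall>j\<in>S. c $ j = 0))
     \<longleftrightarrow> (\<exists>x\<in>carrier_vec k. x \<noteq> 0\<^sub>v k \<and> (\<forall>j\<in>S. col G j \<bullet> x = 0))"
    unfolding code_def using G full_rank_encode_eq_0_iff[OF G r] entry by auto
  then show ?thesis using mrank_colsub_lt_iff[OF G S] by simp
qed

lemma hweight_code:
  assumes G: "G \<in> carrier_mat k n" and c: "c \<in> code G"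
  shows "hweight c = card {j. j < n \<and> c $ j \<noteq> 0}"
  using G c unfolding hweight_def code_def by auto

section \<open>Minimum distance and rank deficiency\<close>

definition low_weight_codeword :: "bit mat \<Rightarrow> nat \<Rightarrow> bool" where
  "low_weight_codeword G m \<longleftrightarrow> (\<exists>c\<in>code G. c \<noteq> 0\<^sub>v (dim_col G) \<and> hweight c \<le> m)"

lemma no_weight_0_codeword:
  assumes G: "G \<in> carrier_mat k n"
  shows "\<not> low_weight_codeword G 0"
proof
  assume "low_weight_codeword G 0"
  then obtain c where c: "c \<in> code G" "c \<noteq> 0\<^sub>v n" "card {j. j < n \<and> c $ j \<noteq> 0} = 0"
    using G hweight_code[OF G] unfolding low_weight_codeword_def by auto
  then have "c = 0\<^sub>v n" using G unfolding code_def by (intro eq_vecI) auto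
  then show False using c(2) by blast
qed

text \<open>Some (n - m)-subset of columns is rank deficient iff the code has a nonzero
  codeword of weight at most m: the complement of such a subset contains the support.\<close>
lemma deficient_subset_iff_low_weight:
  assumes G: "G \<in> carrier_mat k n" and r: "mrank G = k" and m: "m \<le> n"
  shows "(\<exists>S. S \<subseteq> {0..<n} \<and> card S = n - m \<and> mrank (colsub G S) < k)
     \<longleftrightarrow> low_weight_codeword G m"
proof
  assume "\<exists>S. S \<subseteq> {0..<n} \<and> card S = n - m \<and> mrank (colsub G S) < k"
  then obtain S where S: "S \<subseteq> {0..<n}" "card S = n - m" "mrank (colsub G S) < k" by blast
  then obtain c where c: "c \<in> code G" "c \<noteq> 0\<^sub>v n" "\<forall>j\<in>S. c $ j = 0"
    using deficient_iff_vanishing_codeword[OF G r S(1)] by blast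
  have "{j. j < n \<and> c $ j \<noteq> 0} \<subseteq> {0..<n} - S" using c(3) by auto
  then have "card {j. j < n \<and> c $ j \<noteq> 0} \<le> card ({0..<n} - S)" by (intro card_mono) auto
  also have "\<dots> = m" using card_Diff_subset[OF _ S(1)] S(1,2) m finite_subset by fastforce
  finally show "low_weight_codeword G m"
    using c G hweight_code[OF G c(1)] unfolding low_weight_codeword_def by auto
next
  assume "low_weight_codeword G m"
  then obtain c where c: "c \<in> code G" "c \<noteq> 0\<^sub>v n" "hweight c \<le> m"
    using G unfolding low_weight_codeword_def by auto
  define T where "T = {j. j < n \<and> c $ j \<noteq> 0}"
  have T: "T \<subseteq> {0..<n}" "card T \<le> m" using c hweight_code[OF G c(1)] unfolding T_def by auto
  have "card ({0..<n} - T) = n - card T"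
    using card_Diff_subset[OF finite_subset[OF T(1)] T(1)] by simp
  then have "card ({0..<n} - T) \<ge> n - m" using T(2) by linarith
  then obtain S where S: "S \<subseteq> {0..<n} - T" "card S = n - m"
    using obtain_subset_with_card_n by metis
  have "\<forall>j\<in>S. c $ j = 0" using S(1) unfolding T_def by auto
  then have "mrank (colsub G S) < k"
    using deficient_iff_vanishing_codeword[OF G r] S(1) c by blast
  then show "\<exists>S. S \<subseteq> {0..<n} \<and> card S = n - m \<and> mrank (colsub G S) < k" using S by blast
qed

text \<open>The minimum distance is at most m iff there is a nonzero codeword of weight at most m;
  the rank and dimension hypotheses guarantee that nonzero codewords exist.\<close>
lemma dmin_le_iff:
  assumes G: "G \<in> carrier_mat k n" and r: "mrank G = k" and k: "k \<ge> 1"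
  shows "dmin G \<le> m \<longleftrightarrow> low_weight_codeword G m"
proof -
  define W where "W = {hweight c | c. c \<in> code G \<and> c \<noteq> 0\<^sub>v n}"
  have "hweight c \<le> n" if "c \<in> code G" for c
  proof -
    have "card {j. j < n \<and> c $ j \<noteq> 0} \<le> card {0..<n}" by (intro card_mono) auto
    then show ?thesis using hweight_code[OF G that] by simp
  qed
  then have "W \<subseteq> {0..n}" unfolding W_def by auto
  then have fin: "finite W" using finite_subset by blast
  have unit: "unit_vec k 0 \<in> carrier_vec k" "unit_vec k 0 \<noteq> (0\<^sub>v k :: bit vec)"
    using k by (auto simp: vec_eq_iff)
  then have "transpose_mat G *\<^sub>v unit_vec k 0 \<in> code G"
     "transpose_mat G *\<^sub>v unit_vec k 0 \<noteq> 0\<^sub>v n"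
    using full_rank_encode_eq_0_iff[OF G r] G unfolding code_def by auto
  then have "W \<noteq> {}" unfolding W_def by blast
  moreover have "dmin G = Min W" unfolding dmin_def W_def using G by simp
  ultimately show ?thesis
    using Min_le_iff[OF fin] G unfolding W_def low_weight_codeword_def by auto
qed

definition rank_deficiency :: "bit mat \<Rightarrow> nat \<Rightarrow> nat" where
  "rank_deficiency G g = (\<Sum>S \<in> {S. S \<subseteq> {0..<dim_col G} \<and> card S = g}.
                            dim_row G - mrank (colsub G S))"

text \<open>Each of the (n choose g) submatrices contributes k = its rank + its deficiency.\<close>
lemma info_fun_eq:
  assumes G: "G \<in> carrier_mat k n"
  shows "int (info_fun G g) = int k * int (n choose g) - int (rank_deficiency G g)"
proof -
  let ?F = "{S. S \<subseteq> {0..<n} \<and> card S = g}"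
  have "info_fun G g + rank_deficiency G g = (\<Sum>S\<in>?F. mrank (colsub G S) + (k - mrank (colsub G S)))"
    unfolding info_fun_def rank_deficiency_def using G by (simp add: sum.distrib)
  also have "\<dots> = (\<Sum>S\<in>?F. k)" using mrank_colsub_le[OF G] by (intro sum.cong) auto
  also have "\<dots> = k * (n choose g)" using n_subsets[of "{0..<n}" g] by simp
  finally show ?thesis by (metis add_diff_cancel_right' of_nat_add of_nat_mult)
qed

lemma rank_deficiency_eq_0_iff:
  assumes G: "G \<in> carrier_mat k n" and r: "mrank G = k" and k: "k \<ge> 1" and m: "m \<le> n"
  shows "rank_deficiency G (n - m) = 0 \<longleftrightarrow> m < dmin G"
proof -
  have fin: "finite {S. S \<subseteq> {0..<n} \<and> card S = n - m}"
    by (rule finite_subset[of _ "Pow {0..<n}"]) auto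
  have "rank_deficiency G (n - m) = 0
      \<longleftrightarrow> \<not> (\<exists>S. S \<subseteq> {0..<n} \<and> card S = n - m \<and> mrank (colsub G S) < k)"
    unfolding rank_deficiency_def using G mrank_colsub_le[OF G] by (auto simp: sum_eq_0_iff[OF fin])
  then show ?thesis
    using deficient_subset_iff_low_weight[OF G r m] dmin_le_iff[OF G r k, of m] by (metis not_le)
qed

section \<open>The coefficients a_0 and a_1\<close>

text \<open>a_0 = D_(n-1), since D_n = 0 (there is no nonzero codeword of weight 0).\<close>
lemma coef_a_0_eq:
  assumes G: "G \<in> carrier_mat k n" and r: "mrank G = k" and k: "k \<ge> 1" and n: "n \<ge> 1"
  shows "coef_a G 0 = int (rank_deficiency G (n - 1))"
proof -
  have "0 < dmin G" using dmin_le_iff[OF G r k, of 0] no_weight_0_codeword[OF G] by simp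
  then have "rank_deficiency G n = 0" using rank_deficiency_eq_0_iff[OF G r k, of 0] by simp
  moreover have "n choose (n - 1) = n" using n binomial_symmetric[of 1 n] by simp
  ultimately show ?thesis
    using G info_fun_eq[OF G, of n] info_fun_eq[OF G, of "n - 1"] by (simp add: coef_a_def)
qed

lemma two_choose_diff_two:
  assumes "n \<ge> 2"
  shows "2 * int (n choose (n - 2)) = int n * (int n - 1)"
proof -
  have "n choose (n - 2) = n choose 2" using assms binomial_symmetric[of 2 n] by simp
  moreover have "2 * (n choose 2) = n * (n - 1)"
    using Suc_times_binomial[of 1 "n - 1"] assms by (simp add: numeral_2_eq_2)
  ultimately have "2 * int (n choose (n - 2)) = int n * int (n - 1)"
    by (metis of_nat_mult of_nat_numeral)
  then show ?thesis using assms by (simp add: of_nat_diff)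
qed

lemma coef_a_1_eq:
  assumes G: "G \<in> carrier_mat k n" and n: "n \<ge> 2"
  shows "coef_a G 1 = 2 * int (rank_deficiency G (n - 2))
                      - (int n - 1) * int (rank_deficiency G (n - 1))"
proof -
  have "coef_a G 1 = (int n - 1) * int (info_fun G (n - 1)) - 2 * int (info_fun G (n - 2))"
    using G n unfolding coef_a_def by (simp add: of_nat_diff numeral_2_eq_2)
  also have "\<dots> = (int n - 1) * (int k * int n - int (rank_deficiency G (n - 1)))
      - (int k * (2 * int (n choose (n - 2))) - 2 * int (rank_deficiency G (n - 2)))"
    using n binomial_symmetric[of 1 n] by (simp add: info_fun_eq[OF G] algebra_simps)
  also have "\<dots> = 2 * int (rank_deficiency G (n - 2)) - (int n - 1) * int (rank_deficiency G (n - 1))"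
    unfolding two_choose_diff_two[OF n] by (simp add: algebra_simps)
  finally show ?thesis .
qed

section \<open>The slope of the EXIT function at p = 0\<close>

lemma bernstein_term_deriv_0:
  fixes t e :: nat
  shows "((\<lambda>p::real. p ^ t * (1 - p) ^ e) has_real_derivative
      (if t = 0 then - real e else if t = 1 then 1 else 0)) (at 0)"
proof -
  have "((\<lambda>p::real. p ^ t * (1 - p) ^ e) has_real_derivative
      (real t * 0 ^ (t - 1) * (1 - 0) ^ e + 0 ^ t * (real e * (1 - 0) ^ (e - 1) * (0 - 1)))) (at 0)"
    by (intro derivative_eq_intros refl) auto
  moreover have "real t * 0 ^ (t - 1) * (1 - 0) ^ e + 0 ^ t * (real e * (1 - 0) ^ (e - 1) * (0 - 1))
      = (if t = 0 then - real e else if t = 1 then (1::real) else 0)"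
    by (cases t; cases "t - 1") auto
  ultimately show ?thesis by simp
qed

lemma exit_poly_deriv_0:
  fixes c :: "nat \<Rightarrow> real" and n :: nat
  assumes n: "n \<ge> 2"
  shows "((\<lambda>p. 1 - (1 / real n) * (\<Sum>t<n. c t * p ^ t * (1 - p) ^ (n - t - 1)))
     has_real_derivative ((real n - 1) * c 0 - c 1) / real n) (at 0)"
proof -
  let ?slope = "\<lambda>t. c t * (if t = 0 then - real (n - t - 1) else if t = 1 then 1 else 0)"
  have sum: "((\<lambda>p. \<Sum>t<n. c t * p ^ t * (1 - p) ^ (n - t - 1)) has_real_derivative
      (\<Sum>t<n. ?slope t)) (at 0)"
  proof (rule DERIV_sum)
    fix t
    show "((\<lambda>p. c t * p ^ t * (1 - p) ^ (n - t - 1)) has_real_derivative ?slope t) (at 0)"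
      using DERIV_cmult[OF bernstein_term_deriv_0[of t "n - t - 1"], of "c t"]
      by (simp add: mult.assoc)
  qed
  have "(\<Sum>t<n. ?slope t) = (\<Sum>t\<in>{0, 1}. ?slope t)"
    using n by (intro sum.mono_neutral_right) auto
  also have "\<dots> = c 1 - (real n - 1) * c 0" using n by (simp add: of_nat_diff algebra_simps)
  finally have slope: "(\<Sum>t<n. ?slope t) = c 1 - (real n - 1) * c 0" .
  have "0 - 1 / real n * (c 1 - (real n - 1) * c 0) = ((real n - 1) * c 0 - c 1) / real n"
    using n by (simp add: field_simps)
  then show ?thesis
    using DERIV_diff[OF DERIV_const[of 1] DERIV_cmult[OF sum[unfolded slope], of "1 / real n"]]
    by simp
qed

theorem mainTheorem4:
  fixes G :: "bit mat" and n k :: nat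
  assumes "G \<in> carrier_mat k n" and "n \<ge> 2" and "k \<ge> 1" and "mrank G = k"
  shows "(exit_IE G has_real_derivative
            ((real n - 1) * real_of_int (coef_a G 0) - real_of_int (coef_a G 1)) / real n)
           (at 0 within {0..1})
       \<and> (coef_a G 0 = 0 \<longleftrightarrow> dmin G \<ge> 2)
       \<and> (dmin G \<ge> 2 \<longrightarrow> coef_a G 1 = 2 * int (Delta G) \<and>
           (exit_IE G has_real_derivative (- 2 / real n * real (Delta G))) (at 0 within {0..1}))
       \<and> (dmin G \<ge> 3 \<longrightarrow> coef_a G 1 = 0 \<and> Delta G = 0)
       \<and> (dmin G = 2 \<longrightarrow> Delta G > 0 \<and> coef_a G 1 \<noteq> 0)"
proof -
  note G = assms(1) and n = assms(2) and k = assms(3) and r = assms(4)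
  have Delta: "Delta G = rank_deficiency G (n - 2)"
    unfolding Delta_def rank_deficiency_def using G by simp
  have a0: "coef_a G 0 = int (rank_deficiency G (n - 1))"
    using coef_a_0_eq[OF G r k] n by simp
  have a1: "coef_a G 1 = 2 * int (Delta G) - (int n - 1) * int (rank_deficiency G (n - 1))"
    using coef_a_1_eq[OF G n] Delta by simp
  have dmin2: "2 \<le> dmin G \<longleftrightarrow> rank_deficiency G (n - 1) = 0"
    using rank_deficiency_eq_0_iff[OF G r k, of 1] n by auto
  have dmin3: "3 \<le> dmin G \<longleftrightarrow> Delta G = 0"
    using rank_deficiency_eq_0_iff[OF G r k, of 2] n Delta by auto
  have slope: "(exit_IE G has_real_derivative
            ((real n - 1) * real_of_int (coef_a G 0) - real_of_int (coef_a G 1)) / real n)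
           (at 0 within {0..1})"
    unfolding exit_IE_def using G has_field_derivative_at_within[OF exit_poly_deriv_0[OF n]] by simp
  have "2 \<le> dmin G \<Longrightarrow>
      ((real n - 1) * real_of_int (coef_a G 0) - real_of_int (coef_a G 1)) / real n
      = - 2 / real n * real (Delta G)"
    using a0 a1 dmin2 by simp
  then show ?thesis using slope a0 a1 dmin2 dmin3 by auto
qed

end
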